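(* Fix a positive integer $n$, a covertness threshold $\delta>0$, and risk budgets $\epsilon_{\text{cov}},\epsilon_{\text{rel}}\in(0,1)$. Let $(\eta,\overline{n}_B)$ be a random pair (with arbitrary joint distribution) taking values in $(0,1)\times[0,\infty)$, and let $c_{\text{cov}}=c_{\text{cov}}(\eta,\overline{n}_B)$ and $R_{\text{ach}}=R_{\text{ach}}(\eta,\overline{n}_B)$ be the induced random variables (defined in the context). Consider the risk-constrained program \[ \max_{q,R}\; T(q,R)=qR \quad\text{s.t.}\quad \mathbb{P}\!\left[q>\tfrac{2\delta}{\sqrt{n}}\,c_{\text{cov}}\right]\le\epsilon_{\text{cov}},\quad \mathbb{P}\!\left[R>R_{\text{ach}}\right]\le\epsilon_{\text{rel}},\quad 0\le q\le 1,\ 0\le R\le 1. \] For a real random variable $X$ define $F_X^{<}(x)=\mathbb{P}[X<x]$ and $Q_X^{<}(\epsilon)=\sup\{x\in\mathbb{R}: F_X^{<}(x)\le\epsilon\}$. Set \[ q_{\max}=\min\!\left\{1,\ \frac{2\delta}{\sqrt{n}}\,Q^{<}_{c_{\text{cov}}}(\epsilon_{\text{cov}})\right\},\qquad R_{\max}=Q^{<}_{R_{\text{ach}}}(\epsilon_{\text{rel}}). \] Then an optimal strategy is $(q^*,R^* )=(q_{\max},R_{\max})$, and the maximum per-use covert throughput is $T^*=q^*R^*=q_{\max}R_{\max}$. This holds for arbitrary distributions of $(\eta,\overline{n}_B)$, including cases where the distributions of $c_{\text{cov}}$ or $R_{\text{ach}}$ have atoms.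
   Context: Definitions: for $\eta\in(0,1)$ and $\overline{n}_B\ge0$, the covertness constant is $c_{\text{cov}}(\eta,\overline{n}_B)=\dfrac{\sqrt{2\eta\overline{n}_B(1+\eta\overline{n}_B)}}{1-\eta}$. The depolarizing probability is $p(\eta,\overline{n}_B)=1-\dfrac{\eta}{[1+(1-\eta)\overline{n}_B]^4}$, with Pauli error vector $\vec p=(1-\tfrac{3p}{4},\tfrac p4,\tfrac p4,\tfrac p4)$ and Shannon entropy $H(\vec p)=-\sum_i p_i\log_2 p_i$ (with $0\log 0=0$). The instantaneous achievable rate is $R_{\text{ach}}(\eta,\overline{n}_B)=(1-H(\vec p(\eta,\overline{n}_B)))^+$, where $(x)^+=\max(x,0)$. Here $q$ is the per-channel-use transmission probability and $R$ is the chosen code rate; all probabilities are over the randomness of $(\eta,\overline{n}_B)$. *)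

theory Defs
  imports "HOL-Probability.Probability"
begin

definition c_cov :: "real \<Rightarrow> real \<Rightarrow> real" where
  "c_cov eta nB = sqrt (2 * eta * nB * (1 + eta * nB)) / (1 - eta)"

definition p_dep :: "real \<Rightarrow> real \<Rightarrow> real" where
  "p_dep eta nB = 1 - eta / (1 + (1 - eta) * nB) ^ 4"

definition pauli_vec :: "real \<Rightarrow> real list" where
  "pauli_vec p = [1 - 3 * p / 4, p / 4, p / 4, p / 4]"

definition shannon_H :: "real list \<Rightarrow> real" where
  "shannon_H ps = - sum_list (map (\<lambda>x. if x = 0 then 0 else x * log 2 x) ps)"

definition R_ach :: "real \<Rightarrow> real \<Rightarrow> real" where
  "R_ach eta nB = max (1 - shannon_H (pauli_vec (p_dep eta nB))) 0"

definition F_lt :: "'a measure \<Rightarrow> ('a \<Rightarrow> real) \<Rightarrow> real \<Rightarrow> real" where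
  "F_lt M X x = measure M {\<omega> \<in> space M. X \<omega> < x}"

definition Q_lt :: "'a measure \<Rightarrow> ('a \<Rightarrow> real) \<Rightarrow> real \<Rightarrow> real" where
  "Q_lt M X eps = Sup {x. F_lt M X x \<le> eps}"

definition feasible ::
  "'a measure \<Rightarrow> nat \<Rightarrow> real \<Rightarrow> real \<Rightarrow> real \<Rightarrow> ('a \<Rightarrow> real) \<Rightarrow> ('a \<Rightarrow> real) \<Rightarrow> real \<Rightarrow> real \<Rightarrow> bool" where
  "feasible M n \<delta> eps_cov eps_rel eta nB q R \<longleftrightarrow>
     measure M {\<omega> \<in> space M. q > 2 * \<delta> / sqrt (real n) * c_cov (eta \<omega>) (nB \<omega>)} \<le> eps_cov
   \<and> measure M {\<omega> \<in> space M. R > R_ach (eta \<omega>) (nB \<omega>)} \<le> eps_rel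
   \<and> 0 \<le> q \<and> q \<le> 1 \<and> 0 \<le> R \<and> R \<le> 1"

end

theory Submission
  imports Defs
begin

text \<open>Both chance constraints are threshold conditions on a left-limit CDF:
  \<open>P[q > c X] \<le> eps\<close> says \<open>F\<^sup><\<^sub>X(q/c) \<le> eps\<close>, and since \<open>F\<^sup><\<^sub>X\<close> is monotone and
  left-continuous (it is the left limit of the ordinary CDF), the supremum defining
  \<open>Q\<^sup><\<^sub>X(eps)\<close> is attained, whatever atoms \<open>X\<close> has. Hence \<open>F\<^sup><\<^sub>X(x) \<le> eps\<close> iff
  \<open>x \<le> Q\<^sup><\<^sub>X(eps)\<close>, the feasible set is the box \<open>[0, q_max] \<times> [0, R_max]\<close>, and the
  throughput \<open>q R\<close> is maximal at its upper corner.\<close>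

context prob_space
begin

lemma F_lt_distr:
  assumes "X \<in> borel_measurable M"
  shows "F_lt M X x = measure (distr M borel X) {..<x}"
  using assms unfolding F_lt_def by (simp add: measure_distr vimage_def Int_def conj_commute)

lemma F_lt_mono:
  assumes "X \<in> borel_measurable M" and "x \<le> y"
  shows "F_lt M X x \<le> F_lt M X y"
  unfolding F_lt_def using assms by (intro finite_measure_mono) auto

lemma F_lt_le_cdf:
  assumes "X \<in> borel_measurable M"
  shows "F_lt M X x \<le> cdf (distr M borel X) x"
proof -
  interpret D: real_distribution "distr M borel X" using assms by simp
  show ?thesis unfolding F_lt_distr[OF assms] cdf_def by (intro D.finite_measure_mono) auto
qed

lemma cdf_le_F_lt:
  assumes "X \<in> borel_measurable M" and "x < y"
  shows "cdf (distr M borel X) x \<le> F_lt M X y"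
proof -
  interpret D: real_distribution "distr M borel X" using assms by simp
  show ?thesis
    unfolding F_lt_distr[OF assms(1)] cdf_def using assms(2) by (intro D.finite_measure_mono) auto
qed

lemma bdd_above_F_lt_sublevel:
  assumes "X \<in> borel_measurable M" and "eps < 1"
  shows "bdd_above {x. F_lt M X x \<le> eps}"
proof -
  interpret D: real_distribution "distr M borel X" using assms by simp
  obtain b where b: "eps < cdf (distr M borel X) b"
    using eventually_happens'[OF _ order_tendstoD(1)[OF D.cdf_lim_at_top_prob assms(2)]] by auto
  have "x \<le> b" if "F_lt M X x \<le> eps" for x
    using cdf_le_F_lt[OF assms(1), of b x] b that by (cases "x \<le> b") auto
  then show ?thesis by (intro bdd_aboveI[where M = b]) auto
qed

text \<open>This is where \<open>0 < eps\<close> is needed: otherwise \<open>Q_lt M X eps\<close> may be the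
  unspecified \<open>Sup {}\<close>.\<close>

lemma F_lt_sublevel_nonempty:
  assumes "X \<in> borel_measurable M" and "0 < eps"
  obtains a where "F_lt M X a \<le> eps"
proof -
  interpret D: real_distribution "distr M borel X" using assms by simp
  obtain a where "cdf (distr M borel X) a < eps"
    using eventually_happens'[OF _ order_tendstoD(2)[OF D.cdf_lim_at_bot assms(2)]] by auto
  then show thesis using that F_lt_le_cdf[OF assms(1), of a] by (meson less_imp_le order_trans)
qed

lemma F_lt_Q_lt_le:
  assumes "X \<in> borel_measurable M" and "0 < eps" and "eps < 1"
  shows "F_lt M X (Q_lt M X eps) \<le> eps"
proof -
  interpret D: real_distribution "distr M borel X" using assms by simp
  let ?Q = "Q_lt M X eps"
  have nonempty: "{x. F_lt M X x \<le> eps} \<noteq> {}"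
    using F_lt_sublevel_nonempty[OF assms(1,2)] by blast
  have below: "cdf (distr M borel X) x \<le> eps" if "x < ?Q" for x
  proof -
    from that nonempty obtain y where "F_lt M X y \<le> eps" and "x < y"
      unfolding Q_lt_def by (auto elim: less_cSupE)
    then show ?thesis using cdf_le_F_lt[OF assms(1), of x y] by linarith
  qed
  have "\<forall>\<^sub>F x in at_left ?Q. cdf (distr M borel X) x \<le> eps"
    unfolding eventually_at_filter by (intro always_eventually) (simp add: below)
  moreover have "(cdf (distr M borel X) \<longlongrightarrow> F_lt M X ?Q) (at_left ?Q)"
    unfolding F_lt_distr[OF assms(1)] by (rule D.cdf_at_left)
  ultimately show ?thesis using tendsto_upperbound trivial_limit_at_left_real by blast
qed

lemma F_lt_le_iff_le_Q_lt:
  assumes "X \<in> borel_measurable M" and "0 < eps" and "eps < 1"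
  shows "F_lt M X x \<le> eps \<longleftrightarrow> x \<le> Q_lt M X eps"
proof
  assume "F_lt M X x \<le> eps"
  then show "x \<le> Q_lt M X eps"
    unfolding Q_lt_def using bdd_above_F_lt_sublevel[OF assms(1,3)] by (intro cSup_upper) auto
next
  assume "x \<le> Q_lt M X eps"
  then show "F_lt M X x \<le> eps"
    using F_lt_mono[OF assms(1)] F_lt_Q_lt_le[OF assms] by (meson order_trans)
qed

lemma Q_lt_lower_bound:
  assumes "X \<in> borel_measurable M" and "0 < eps" and "eps < 1"
    and "\<forall>\<omega>\<in>space M. a \<le> X \<omega>"
  shows "a \<le> Q_lt M X eps"
proof -
  have "{\<omega> \<in> space M. X \<omega> < a} = {}" using assms(4) by force
  then have "F_lt M X a = 0" unfolding F_lt_def by (simp only: measure_empty)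
  then show ?thesis using F_lt_le_iff_le_Q_lt[OF assms(1-3), of a] assms(2) by simp
qed

lemma Q_lt_upper_bound:
  assumes "X \<in> borel_measurable M" and "0 < eps" and "eps < 1"
    and "\<forall>\<omega>\<in>space M. X \<omega> \<le> b"
  shows "Q_lt M X eps \<le> b"
proof (rule ccontr)
  assume "\<not> Q_lt M X eps \<le> b"
  then have "{\<omega> \<in> space M. X \<omega> < Q_lt M X eps} = space M" using assms(4) by force
  then have "F_lt M X (Q_lt M X eps) = 1" unfolding F_lt_def by (simp add: prob_space)
  then show False using F_lt_Q_lt_le[OF assms(1-3)] assms(3) by simp
qed

lemma chance_constraint_iff_le_Q_lt:
  assumes "X \<in> borel_measurable M" and "0 < eps" and "eps < 1" and "0 < c"
  shows "measure M {\<omega> \<in> space M. q > c * X \<omega>} \<le> eps \<longleftrightarrow> q \<le> c * Q_lt M X eps"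
proof -
  have "{\<omega> \<in> space M. q > c * X \<omega>} = {\<omega> \<in> space M. X \<omega> < q / c}"
    using assms(4) by (auto simp: field_simps)
  then have "measure M {\<omega> \<in> space M. q > c * X \<omega>} = F_lt M X (q / c)"
    unfolding F_lt_def by simp
  also have "\<dots> \<le> eps \<longleftrightarrow> q / c \<le> Q_lt M X eps"
    by (rule F_lt_le_iff_le_Q_lt[OF assms(1-3)])
  finally show ?thesis using assms(4) by (simp add: field_simps)
qed

end

lemma c_cov_nonneg:
  assumes "0 \<le> eta" and "eta < 1" and "0 \<le> nB"
  shows "0 \<le> c_cov eta nB"
  unfolding c_cov_def using assms by simp

lemma p_dep_bounds:
  assumes "0 \<le> eta" and "eta \<le> 1" and "0 \<le> nB"
  shows "0 \<le> p_dep eta nB" and "p_dep eta nB \<le> 1"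
proof -
  have "1 \<le> (1 + (1 - eta) * nB) ^ 4" using assms by simp
  then have "eta \<le> (1 + (1 - eta) * nB) ^ 4" using assms(2) by linarith
  with \<open>1 \<le> _\<close> have "0 \<le> eta / (1 + (1 - eta) * nB) ^ 4" and "eta / (1 + (1 - eta) * nB) ^ 4 \<le> 1"
    using assms by (simp_all add: divide_le_eq)
  then show "0 \<le> p_dep eta nB" and "p_dep eta nB \<le> 1" unfolding p_dep_def by linarith+
qed

lemma shannon_H_nonneg:
  assumes "\<forall>x\<in>set ps. 0 \<le> x \<and> x \<le> 1"
  shows "0 \<le> shannon_H ps"
proof -
  have "(if x = 0 then 0 else x * log 2 x) \<le> 0" if "x \<in> set ps" for x
    using assms that by (auto intro!: mult_nonneg_nonpos)
  then have "sum_list (map (\<lambda>x. if x = 0 then 0 else x * log 2 x) ps) \<le> 0"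
    by (intro sum_list_nonpos) (simp only: set_map image_iff, blast)
  then show ?thesis unfolding shannon_H_def by simp
qed

lemma R_ach_bounds:
  assumes "0 \<le> eta" and "eta \<le> 1" and "0 \<le> nB"
  shows "0 \<le> R_ach eta nB" and "R_ach eta nB \<le> 1"
proof -
  have "\<forall>x\<in>set (pauli_vec (p_dep eta nB)). 0 \<le> x \<and> x \<le> 1"
    using p_dep_bounds[OF assms] unfolding pauli_vec_def by auto
  then show "R_ach eta nB \<le> 1" unfolding R_ach_def using shannon_H_nonneg by fastforce
qed (simp add: R_ach_def)

lemma borel_measurable_c_cov [measurable]:
  assumes [measurable]: "eta \<in> borel_measurable M" "nB \<in> borel_measurable M"
  shows "(\<lambda>\<omega>. c_cov (eta \<omega>) (nB \<omega>)) \<in> borel_measurable M"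
  unfolding c_cov_def by measurable

lemma borel_measurable_R_ach [measurable]:
  assumes [measurable]: "eta \<in> borel_measurable M" "nB \<in> borel_measurable M"
  shows "(\<lambda>\<omega>. R_ach (eta \<omega>) (nB \<omega>)) \<in> borel_measurable M"
  unfolding R_ach_def shannon_H_def pauli_vec_def p_dep_def by simp measurable

lemma feasible_iff_le_quantiles:
  assumes "prob_space M"
    and "eta \<in> borel_measurable M" and "nB \<in> borel_measurable M"
    and "\<forall>\<omega>\<in>space M. 0 \<le> eta \<omega> \<and> eta \<omega> \<le> 1 \<and> 0 \<le> nB \<omega>"
    and "0 < n" and "0 < \<delta>"
    and "0 < eps_cov" and "eps_cov < 1" and "0 < eps_rel" and "eps_rel < 1"
  shows "feasible M n \<delta> eps_cov eps_rel eta nB q R \<longleftrightarrow>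
    0 \<le> q \<and> q \<le> min 1 (2 * \<delta> / sqrt (real n) * Q_lt M (\<lambda>\<omega>. c_cov (eta \<omega>) (nB \<omega>)) eps_cov) \<and>
    0 \<le> R \<and> R \<le> Q_lt M (\<lambda>\<omega>. R_ach (eta \<omega>) (nB \<omega>)) eps_rel"
proof -
  interpret prob_space M by fact
  have covert: "measure M {\<omega> \<in> space M. q > 2 * \<delta> / sqrt (real n) * c_cov (eta \<omega>) (nB \<omega>)} \<le> eps_cov
      \<longleftrightarrow> q \<le> 2 * \<delta> / sqrt (real n) * Q_lt M (\<lambda>\<omega>. c_cov (eta \<omega>) (nB \<omega>)) eps_cov"
    using assms by (intro chance_constraint_iff_le_Q_lt) simp_all
  have reliable: "measure M {\<omega> \<in> space M. R > R_ach (eta \<omega>) (nB \<omega>)} \<le> eps_rel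
      \<longleftrightarrow> R \<le> Q_lt M (\<lambda>\<omega>. R_ach (eta \<omega>) (nB \<omega>)) eps_rel"
    using assms chance_constraint_iff_le_Q_lt[of "\<lambda>\<omega>. R_ach (eta \<omega>) (nB \<omega>)" eps_rel 1 R] by simp
  have "Q_lt M (\<lambda>\<omega>. R_ach (eta \<omega>) (nB \<omega>)) eps_rel \<le> 1"
    using assms R_ach_bounds(2) by (intro Q_lt_upper_bound) simp_all
  then show ?thesis unfolding feasible_def covert reliable by auto
qed

theorem theorem1:
  fixes M :: "'a measure" and eta nB :: "'a \<Rightarrow> real"
    and n :: nat and \<delta> eps_cov eps_rel :: real
  assumes "prob_space M"
    and "eta \<in> borel_measurable M" and "nB \<in> borel_measurable M"
    and "\<forall>\<omega>\<in>space M. 0 < eta \<omega> \<and> eta \<omega> < 1 \<and> 0 \<le> nB \<omega>"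
    and "0 < n" and "0 < \<delta>"
    and "0 < eps_cov" and "eps_cov < 1" and "0 < eps_rel" and "eps_rel < 1"
  shows "let q_max = min 1 (2 * \<delta> / sqrt (real n) *
                 Q_lt M (\<lambda>\<omega>. c_cov (eta \<omega>) (nB \<omega>)) eps_cov);
             R_max = Q_lt M (\<lambda>\<omega>. R_ach (eta \<omega>) (nB \<omega>)) eps_rel
         in feasible M n \<delta> eps_cov eps_rel eta nB q_max R_max
            \<and> (\<forall>q R. feasible M n \<delta> eps_cov eps_rel eta nB q R \<longrightarrow> q * R \<le> q_max * R_max)"
proof -
  interpret prob_space M by fact
  define q_max where "q_max = min 1 (2 * \<delta> / sqrt (real n) *
    Q_lt M (\<lambda>\<omega>. c_cov (eta \<omega>) (nB \<omega>)) eps_cov)"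
  define R_max where "R_max = Q_lt M (\<lambda>\<omega>. R_ach (eta \<omega>) (nB \<omega>)) eps_rel"
  have feasible_iff: "feasible M n \<delta> eps_cov eps_rel eta nB q R \<longleftrightarrow>
      0 \<le> q \<and> q \<le> q_max \<and> 0 \<le> R \<and> R \<le> R_max" for q R
    unfolding q_max_def R_max_def using assms
    by (intro feasible_iff_le_quantiles) (auto simp: less_imp_le)
  have "0 \<le> Q_lt M (\<lambda>\<omega>. c_cov (eta \<omega>) (nB \<omega>)) eps_cov"
    using assms c_cov_nonneg by (intro Q_lt_lower_bound) (simp_all add: less_imp_le)
  then have "0 \<le> q_max" unfolding q_max_def using assms by simp
  moreover have "0 \<le> R_max"
    unfolding R_max_def using assms R_ach_bounds(1) by (intro Q_lt_lower_bound) (simp_all add: less_imp_le)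
  ultimately show ?thesis
    unfolding q_max_def[symmetric] R_max_def[symmetric] Let_def feasible_iff
    by (auto intro: mult_mono)
qed

end
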